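(* Let $n\geqslant2$, $\lambda>0$, distinct points $p_1,\ldots,p_M\in\mathbb{Z}^n$ and positive integers $n_1,\ldots,n_M$ be given, and let $g=4\pi\sum_{j=1}^Mn_j\delta_{p_j}$. Let $\Omega_0\subset\mathbb{Z}^n$ be a finite set containing $\{p_j\}_{j=1}^M$ and let $\Omega$ be a finite connected subset with $\Omega_0\subset\Omega$. Fix $K>2\lambda$, let $u_0=0$ and for $k\geqslant1$ let $u_k:\overline\Omega\to\mathbb{R}$ be the (unique) solution of $$(\Delta-K)u_k=\lambda e^{u_{k-1}}(e^{u_{k-1}}-1)+g-Ku_{k-1}\ \text{ on }\Omega,\qquad u_k=0\ \text{ on }\delta\Omega.$$ Then there exists a real-valued function $u_\Omega$ on $\overline\Omega$ such that $u_k\to u_\Omega$ pointwise on $\overline\Omega$, and $u_\Omega$ satisfies $$\Delta u_\Omega=\lambda e^{u_\Omega}(e^{u_\Omega}-1)+g\ \text{ on }\Omega,\qquad u_\Omega=0\ \text{ on }\delta\Omega.$$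
   Context: $\mathbb{Z}^n$ is the integer lattice graph with $x\sim y$ iff $\sum_i|x_i-y_i|=1$. For a finite $\Omega\subset\mathbb{Z}^n$, $\delta\Omega=\{y\in\mathbb{Z}^n\setminus\Omega:\exists x\in\Omega,\ y\sim x\}$ and $\overline\Omega=\Omega\cup\delta\Omega$. For $u:\overline\Omega\to\mathbb{R}$ and $x\in\Omega$, $\Delta u(x)=\sum_{y\sim x}(u(y)-u(x))$. $\delta_p$ is the function equal to $1$ at $p$ and $0$ elsewhere. *)

theory Defs
  imports "HOL-Analysis.Analysis"
begin

text \<open>The integer lattice graph Z^n, with points int ^ 'n (n = CARD('n)).\<close>

definition lat_adj :: "int ^ 'n \<Rightarrow> int ^ 'n \<Rightarrow> bool" where
  "lat_adj x y \<longleftrightarrow> (\<Sum>i\<in>UNIV. \<bar>x $ i - y $ i\<bar>) = 1"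

definition lat_nbrs :: "int ^ 'n \<Rightarrow> (int ^ 'n) set" where
  "lat_nbrs x = {y. lat_adj x y}"

definition vboundary :: "(int ^ 'n) set \<Rightarrow> (int ^ 'n) set" where
  "vboundary \<Omega> = {y. y \<notin> \<Omega> \<and> (\<exists>x\<in>\<Omega>. lat_adj y x)}"

definition vclosure :: "(int ^ 'n) set \<Rightarrow> (int ^ 'n) set" where
  "vclosure \<Omega> = \<Omega> \<union> vboundary \<Omega>"

definition lat_laplacian :: "(int ^ 'n \<Rightarrow> real) \<Rightarrow> int ^ 'n \<Rightarrow> real" where
  "lat_laplacian u x = (\<Sum>y\<in>lat_nbrs x. u y - u x)"

definition lat_connected :: "(int ^ 'n) set \<Rightarrow> bool" where
  "lat_connected \<Omega> \<longleftrightarrow>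
     (\<forall>x\<in>\<Omega>. \<forall>y\<in>\<Omega>. (\<lambda>a b. a \<in> \<Omega> \<and> b \<in> \<Omega> \<and> lat_adj a b)\<^sup>*\<^sup>* x y)"

end

(*
  For K >= lam the map t |-> lam e^t (e^t - 1) - K t is decreasing on t <= 0, so the comparison
  principle for Delta - K (a positive interior maximum of a - b would force Delta(a - b) <= 0 <
  K (a - b)) shows inductively that the iterates u_k decrease and stay nonpositive. The function
  w = G (|x|^2 - R), with G >= g and R large, has Delta w >= g and w <= 0, and the same principle
  keeps it below every u_k. Hence u_k converges pointwise on the finite set vclosure Omega, and
  since Delta only involves finitely many neighbours the limit solves the equation.
*)

theory Submission
  imports Defs
begin

lemma lat_adj_sym: "lat_adj x y \<longleftrightarrow> lat_adj y x"
  unfolding lat_adj_def by (simp add: abs_minus_commute)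

lemma abs_component_le_if_lat_adj:
  assumes "lat_adj x y"
  shows "\<bar>x $ i - y $ i\<bar> \<le> 1"
proof -
  have "\<bar>x $ i - y $ i\<bar> \<le> (\<Sum>j\<in>UNIV. \<bar>x $ j - y $ j\<bar>)"
    by (rule member_le_sum) auto
  with assms show ?thesis unfolding lat_adj_def by simp
qed

lemma finite_lat_nbrs: "finite (lat_nbrs x)"
proof (rule finite_subset)
  show "lat_nbrs x \<subseteq> vec_lambda ` (\<Pi>\<^sub>E i\<in>UNIV. {x $ i - 1..x $ i + 1})"
  proof
    fix y assume "y \<in> lat_nbrs x"
    then have "y $ i \<in> {x $ i - 1..x $ i + 1}" for i
      using abs_component_le_if_lat_adj[of x y i] by (auto simp: lat_nbrs_def abs_le_iff)
    then have "vec_nth y \<in> (\<Pi>\<^sub>E i\<in>UNIV. {x $ i - 1..x $ i + 1})"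
      by auto
    then show "y \<in> vec_lambda ` (\<Pi>\<^sub>E i\<in>UNIV. {x $ i - 1..x $ i + 1})"
      by (metis image_eqI vec_nth_inverse)
  qed
  show "finite (vec_lambda ` (\<Pi>\<^sub>E i\<in>UNIV. {x $ i - 1..x $ i + 1}))"
    by (intro finite_imageI finite_PiE) auto
qed

lemma card_lat_nbrs_pos: "0 < card (lat_nbrs x)"
proof -
  have "lat_adj x (x + axis i 1)" for i
    by (simp add: lat_adj_def axis_def if_distrib cong: if_cong)
  then have "lat_nbrs x \<noteq> {}"
    by (auto simp: lat_nbrs_def)
  with finite_lat_nbrs show ?thesis
    by (simp add: card_gt_0_iff)
qed

lemma lat_nbrs_subset_vclosure: "x \<in> \<Omega> \<Longrightarrow> lat_nbrs x \<subseteq> vclosure \<Omega>"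
  by (auto simp: vclosure_def vboundary_def lat_nbrs_def lat_adj_sym)

lemma finite_vclosure:
  assumes "finite \<Omega>"
  shows "finite (vclosure \<Omega>)"
proof -
  have "vboundary \<Omega> \<subseteq> (\<Union>x\<in>\<Omega>. lat_nbrs x)"
    by (auto simp: vboundary_def lat_nbrs_def lat_adj_sym)
  moreover have "finite (\<Union>x\<in>\<Omega>. lat_nbrs x)"
    using assms by (simp add: finite_lat_nbrs)
  ultimately show ?thesis
    using assms by (auto simp: vclosure_def intro: finite_subset)
qed

lemma lat_laplacian_diff:
  "lat_laplacian (\<lambda>y. a y - b y) x = lat_laplacian a x - lat_laplacian b x"
  unfolding lat_laplacian_def by (simp add: sum_subtractf[symmetric] algebra_simps)

lemma lat_laplacian_scale_shift:
  "lat_laplacian (\<lambda>y. c * (a y - d)) x = c * lat_laplacian a x"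
  unfolding lat_laplacian_def by (simp add: sum_distrib_left algebra_simps)

lemma tendsto_lat_laplacian:
  assumes "\<And>y. y \<in> insert x (lat_nbrs x) \<Longrightarrow> (\<lambda>k. u k y) \<longlonglongrightarrow> v y"
  shows "(\<lambda>k. lat_laplacian (u k) x) \<longlonglongrightarrow> lat_laplacian v x"
  unfolding lat_laplacian_def using assms by (intro tendsto_sum tendsto_diff) auto

definition lat_sqnorm :: "int ^ 'n \<Rightarrow> int" where
  "lat_sqnorm y = (\<Sum>i\<in>UNIV. (y $ i)\<^sup>2)"

lemma lat_sqnorm_nonneg: "0 \<le> lat_sqnorm y"
  unfolding lat_sqnorm_def by (simp add: sum_nonneg)

lemma lat_sqnorm_parallelogram:
  "lat_sqnorm y + lat_sqnorm (2 * x - y) = 2 * lat_sqnorm x + 2 * lat_sqnorm (y - x)"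
  unfolding lat_sqnorm_def
  by (simp add: sum_distrib_left sum.distrib[symmetric] power2_eq_square algebra_simps)

lemma lat_sqnorm_step:
  assumes "lat_adj x y"
  shows "lat_sqnorm (y - x) = 1"
proof -
  have "d\<^sup>2 = \<bar>d\<bar>" if "\<bar>d\<bar> \<le> 1" for d :: int
  proof -
    have "d = -1 \<or> d = 0 \<or> d = 1" using that by linarith
    then show ?thesis by auto
  qed
  then have "(y $ i - x $ i)\<^sup>2 = \<bar>x $ i - y $ i\<bar>" for i
    using abs_component_le_if_lat_adj[OF assms] by (metis abs_minus_commute)
  with assms show ?thesis
    unfolding lat_sqnorm_def lat_adj_def by simp
qed

lemma lat_adj_reflect: "lat_adj x y \<Longrightarrow> lat_adj x (2 * x - y)"
  unfolding lat_adj_def by (simp add: abs_minus_commute algebra_simps)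

lemma sum_lat_nbrs_reflect:
  "(\<Sum>y\<in>lat_nbrs x. f (2 * x - y)) = (\<Sum>y\<in>lat_nbrs x. f y)"
proof -
  have "bij_betw (\<lambda>y. 2 * x - y) (lat_nbrs x) (lat_nbrs x)"
    by (rule bij_betw_byWitness[where f' = "\<lambda>y. 2 * x - y"])
      (auto simp: lat_nbrs_def lat_adj_reflect)
  then show ?thesis
    by (rule sum.reindex_bij_betw)
qed

lemma lat_laplacian_sqnorm:
  "lat_laplacian (\<lambda>y. real_of_int (lat_sqnorm y)) x = real (card (lat_nbrs x))"
proof -
  let ?N = "lat_nbrs x"
  define S where "S = (\<Sum>y\<in>?N. lat_sqnorm y - lat_sqnorm x)"
  have "2 * S = S + (\<Sum>y\<in>?N. lat_sqnorm (2 * x - y) - lat_sqnorm x)"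
    using sum_lat_nbrs_reflect[of "\<lambda>y. lat_sqnorm y - lat_sqnorm x" x] by (simp add: S_def)
  also have "\<dots> = (\<Sum>y\<in>?N. 2 * lat_sqnorm (y - x))"
    unfolding S_def sum.distrib[symmetric]
    by (rule sum.cong[OF refl]) (use lat_sqnorm_parallelogram in \<open>simp add: algebra_simps\<close>)
  also have "\<dots> = 2 * int (card ?N)"
    by (simp add: lat_nbrs_def lat_sqnorm_step)
  finally have "S = int (card ?N)" by simp
  then show ?thesis
    unfolding lat_laplacian_def S_def by (simp flip: of_int_diff of_int_sum)
qed

lemma exp_nonlinearity_antimono:
  fixes lam K a b :: real
  assumes "0 \<le> lam" "lam \<le> K" "a \<le> b" "b \<le> 0"
  shows "lam * exp b * (exp b - 1) - K * b \<le> lam * exp a * (exp a - 1) - K * a"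
proof -
  have exp_le: "exp a \<le> exp b" "exp b \<le> 1"
    using assms by auto
  have exp_lipschitz: "exp b - exp a \<le> b - a"
  proof -
    have "exp b - exp a = exp b * (1 - exp (a - b))"
      by (simp add: algebra_simps exp_diff)
    also have "\<dots> \<le> 1 - exp (a - b)"
      using exp_le \<open>a \<le> b\<close> by (intro mult_left_le_one_le) auto
    also have "\<dots> \<le> b - a"
      using exp_ge_add_one_self[of "a - b"] by linarith
    finally show ?thesis .
  qed
  have "lam * exp b * (exp b - 1) - lam * exp a * (exp a - 1)
      = lam * ((exp b - exp a) * (exp a + exp b - 1))"
    by (simp add: algebra_simps)
  also have "\<dots> \<le> lam * (exp b - exp a)"
  proof -
    have "exp a + exp b - 1 \<le> 1" "0 \<le> exp b - exp a"
      using exp_le by linarith+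
    with assms(1) show ?thesis
      by (intro mult_left_mono mult_left_le)
  qed
  also have "\<dots> \<le> K * (b - a)"
    using exp_lipschitz assms by (intro mult_mono) auto
  finally show ?thesis
    by (simp add: algebra_simps)
qed

lemma lat_comparison_principle:
  fixes a b :: "int ^ 'n \<Rightarrow> real"
  assumes "finite \<Omega>" and "0 < K"
    and op_le: "\<And>x. x \<in> \<Omega> \<Longrightarrow> lat_laplacian b x - K * b x \<le> lat_laplacian a x - K * a x"
    and vboundary_le: "\<And>x. x \<in> vboundary \<Omega> \<Longrightarrow> a x \<le> b x"
    and "x \<in> vclosure \<Omega>"
  shows "a x \<le> b x"
proof -
  define z where "z y = a y - b y" for y
  have "z y \<le> 0" if "y \<in> \<Omega>" for y
  proof (rule ccontr)
    assume "\<not> z y \<le> 0"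
    define zmax where "zmax = Max (z ` \<Omega>)"
    have "zmax \<in> z ` \<Omega>"
      unfolding zmax_def using \<open>finite \<Omega>\<close> \<open>y \<in> \<Omega>\<close> by (intro Max_in) auto
    then obtain x0 where x0: "x0 \<in> \<Omega>" "z x0 = zmax"
      by auto
    have le_zmax: "z y' \<le> zmax" if "y' \<in> \<Omega>" for y'
      using \<open>finite \<Omega>\<close> that unfolding zmax_def by simp
    have "0 < zmax"
      using le_zmax[OF \<open>y \<in> \<Omega>\<close>] \<open>\<not> z y \<le> 0\<close> by simp
    have "lat_laplacian z x0 \<le> 0"
      unfolding lat_laplacian_def
    proof (rule sum_nonpos)
      fix y' assume "y' \<in> lat_nbrs x0"
      then have "y' \<in> \<Omega> \<or> y' \<in> vboundary \<Omega>"
        using x0(1) by (auto simp: lat_nbrs_def vboundary_def lat_adj_sym)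
      then show "z y' - z x0 \<le> 0"
        using le_zmax vboundary_le x0(2) \<open>0 < zmax\<close> by (fastforce simp: z_def)
    qed
    moreover have "0 \<le> lat_laplacian z x0 - K * z x0"
      using op_le[OF x0(1)] unfolding z_def lat_laplacian_diff by (simp add: algebra_simps)
    moreover have "0 < K * z x0"
      using \<open>0 < K\<close> \<open>0 < zmax\<close> x0(2) by simp
    ultimately show False
      by linarith
  qed
  then show ?thesis
    using vboundary_le \<open>x \<in> vclosure \<Omega>\<close> by (fastforce simp: vclosure_def z_def)
qed

lemma exists_nonpos_lat_subsolution:
  fixes S :: "(int ^ 'n) set" and c :: real
  assumes "finite S" and "0 \<le> c"
  obtains w :: "int ^ 'n \<Rightarrow> real"
    where "\<And>x. x \<in> S \<Longrightarrow> w x \<le> 0" and "\<And>x. c \<le> lat_laplacian w x"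
proof -
  define R where "R = (\<Sum>y\<in>S. real_of_int (lat_sqnorm y))"
  define w :: "int ^ 'n \<Rightarrow> real" where "w y = c * (real_of_int (lat_sqnorm y) - R)" for y
  have "w x \<le> 0" if "x \<in> S" for x
  proof -
    have "real_of_int (lat_sqnorm x) \<le> R"
      unfolding R_def using assms(1) that by (intro member_le_sum) (auto simp: lat_sqnorm_nonneg)
    then show ?thesis
      unfolding w_def using assms(2) by (simp add: mult_nonneg_nonpos)
  qed
  moreover have "c \<le> lat_laplacian w x" for x
  proof -
    have "lat_laplacian w x = c * real (card (lat_nbrs x))"
      unfolding w_def lat_laplacian_scale_shift lat_laplacian_sqnorm ..
    moreover have "1 \<le> real (card (lat_nbrs x))"
      using card_lat_nbrs_pos[of x] by simp
    ultimately show ?thesis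
      using assms(2) mult_left_mono[of 1 "real (card (lat_nbrs x))" c] by simp
  qed
  ultimately show ?thesis
    using that by blast
qed

locale lat_monotone_iteration =
  fixes \<Omega> :: "(int ^ 'n) set" and lam K :: real
    and g :: "int ^ 'n \<Rightarrow> real" and u :: "nat \<Rightarrow> int ^ 'n \<Rightarrow> real"
  assumes finite_domain: "finite \<Omega>"
    and lam_nonneg: "0 \<le> lam" and lam_le_K: "lam \<le> K" and K_pos: "0 < K"
    and g_nonneg: "\<And>x. x \<in> \<Omega> \<Longrightarrow> 0 \<le> g x"
    and u_0: "\<And>x. x \<in> vclosure \<Omega> \<Longrightarrow> u 0 x = 0"
    and u_Suc: "\<And>k x. x \<in> \<Omega> \<Longrightarrow>
      lat_laplacian (u (Suc k)) x - K * u (Suc k) x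
        = lam * exp (u k x) * (exp (u k x) - 1) + g x - K * u k x"
    and u_Suc_vboundary: "\<And>k x. x \<in> vboundary \<Omega> \<Longrightarrow> u (Suc k) x = 0"
begin

lemma u_vboundary: "x \<in> vboundary \<Omega> \<Longrightarrow> u k x = 0"
  using u_0 u_Suc_vboundary by (cases k) (auto simp: vclosure_def)

lemmas comparison = lat_comparison_principle[OF finite_domain K_pos]

lemma u_Suc_le_nonpos: "x \<in> vclosure \<Omega> \<Longrightarrow> u (Suc k) x \<le> u k x \<and> u k x \<le> 0"
proof (induction k arbitrary: x)
  case 0
  have "u 1 x \<le> u 0 x"
  proof (rule comparison[OF _ _ 0])
    fix y assume "y \<in> \<Omega>"
    then have "lat_laplacian (u 0) y = 0"
      using u_0 lat_nbrs_subset_vclosure[of y \<Omega>]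
      by (auto simp: lat_laplacian_def vclosure_def intro!: sum.neutral)
    then show "lat_laplacian (u 0) y - K * u 0 y \<le> lat_laplacian (u 1) y - K * u 1 y"
      using u_Suc[OF \<open>y \<in> \<Omega>\<close>, of 0] u_0 g_nonneg \<open>y \<in> \<Omega>\<close> by (simp add: vclosure_def)
  qed (simp add: u_vboundary)
  then show ?case
    using u_0 0 by simp
next
  case (Suc k)
  have "u (Suc (Suc k)) x \<le> u (Suc k) x"
  proof (rule comparison[OF _ _ Suc.prems])
    fix y assume "y \<in> \<Omega>"
    then have "y \<in> vclosure \<Omega>"
      by (simp add: vclosure_def)
    then show "lat_laplacian (u (Suc k)) y - K * u (Suc k) y
        \<le> lat_laplacian (u (Suc (Suc k))) y - K * u (Suc (Suc k)) y"
      using u_Suc[OF \<open>y \<in> \<Omega>\<close>, of k] u_Suc[OF \<open>y \<in> \<Omega>\<close>, of "Suc k"] Suc.IH[of y]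
        exp_nonlinearity_antimono[OF lam_nonneg lam_le_K, of "u (Suc k) y" "u k y"]
      by simp
  qed (simp add: u_vboundary)
  then show ?case
    using Suc.IH[OF Suc.prems] by simp
qed

lemma u_lower_bound:
  obtains w where "\<And>k x. x \<in> vclosure \<Omega> \<Longrightarrow> w x \<le> u k x"
proof -
  obtain w where w_nonpos: "\<And>x. x \<in> vclosure \<Omega> \<Longrightarrow> w x \<le> 0"
    and w_sub: "\<And>x. (\<Sum>y\<in>\<Omega>. g y) \<le> lat_laplacian w x"
    using exists_nonpos_lat_subsolution[OF finite_vclosure[OF finite_domain]]
      g_nonneg by (metis sum_nonneg)
  have g_le: "g x \<le> lat_laplacian w x" if "x \<in> \<Omega>" for x
  proof -
    have "g x \<le> (\<Sum>y\<in>\<Omega>. g y)"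
      using finite_domain that g_nonneg by (intro member_le_sum) auto
    with w_sub[of x] show ?thesis
      by simp
  qed
  have "w x \<le> u k x" if "x \<in> vclosure \<Omega>" for k x
    using that
  proof (induction k arbitrary: x)
    case 0
    then show ?case
      using w_nonpos u_0 by simp
  next
    case (Suc k)
    show ?case
    proof (rule comparison[OF _ _ Suc.prems])
      fix y assume "y \<in> \<Omega>"
      then have "y \<in> vclosure \<Omega>"
        by (simp add: vclosure_def)
      then have "lam * exp (w y) * (exp (w y) - 1) \<le> 0"
        using w_nonpos lam_nonneg by (simp add: mult_nonneg_nonpos)
      then show "lat_laplacian (u (Suc k)) y - K * u (Suc k) y \<le> lat_laplacian w y - K * w y"
        using u_Suc[OF \<open>y \<in> \<Omega>\<close>, of k] g_le[OF \<open>y \<in> \<Omega>\<close>] Suc.IH[OF \<open>y \<in> vclosure \<Omega>\<close>]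
          u_Suc_le_nonpos[OF \<open>y \<in> vclosure \<Omega>\<close>, of k]
          exp_nonlinearity_antimono[OF lam_nonneg lam_le_K, of "w y" "u k y"]
        by simp
    qed (simp add: u_vboundary w_nonpos vclosure_def)
  qed
  then show ?thesis
    using that by blast
qed

theorem converges_to_solution:
  "\<exists>v. (\<forall>x\<in>vclosure \<Omega>. (\<lambda>k. u k x) \<longlonglongrightarrow> v x)
     \<and> (\<forall>x\<in>\<Omega>. lat_laplacian v x = lam * exp (v x) * (exp (v x) - 1) + g x)
     \<and> (\<forall>x\<in>vboundary \<Omega>. v x = 0)"
proof (intro exI conjI ballI)
  obtain w where lower: "\<And>k x. x \<in> vclosure \<Omega> \<Longrightarrow> w x \<le> u k x"
    using u_lower_bound by blast
  define v where "v x = lim (\<lambda>k. u k x)" for x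
  show conv: "(\<lambda>k. u k x) \<longlonglongrightarrow> v x" if "x \<in> vclosure \<Omega>" for x
  proof -
    have "decseq (\<lambda>k. u k x)"
      using u_Suc_le_nonpos[OF that] by (intro decseq_SucI) auto
    then have "convergent (\<lambda>k. u k x)"
      using lower[OF that] decseq_convergent unfolding convergent_def by metis
    then show ?thesis
      by (simp add: v_def convergent_LIMSEQ_iff)
  qed
  show "lat_laplacian v x = lam * exp (v x) * (exp (v x) - 1) + g x" if "x \<in> \<Omega>" for x
  proof -
    have nbhd: "insert x (lat_nbrs x) \<subseteq> vclosure \<Omega>"
      using that lat_nbrs_subset_vclosure[OF that] by (auto simp: vclosure_def)
    have "(\<lambda>k. lat_laplacian (u (Suc k)) x - K * u (Suc k) x)
        \<longlonglongrightarrow> lat_laplacian v x - K * v x"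
      using nbhd by (intro tendsto_diff tendsto_mult_left LIMSEQ_Suc tendsto_lat_laplacian conv) auto
    moreover have "(\<lambda>k. lat_laplacian (u (Suc k)) x - K * u (Suc k) x)
        \<longlonglongrightarrow> lam * exp (v x) * (exp (v x) - 1) + g x - K * v x"
      unfolding u_Suc[OF that] using nbhd by (intro tendsto_intros conv) auto
    ultimately show ?thesis
      using LIMSEQ_unique by fastforce
  qed
  show "v x = 0" if "x \<in> vboundary \<Omega>" for x
    using u_vboundary[OF that] by (simp add: v_def)
qed

end

theorem lemma3p2:
  fixes lam K :: real and M :: nat
    and p :: "nat \<Rightarrow> int ^ 'n" and m :: "nat \<Rightarrow> nat"
    and g :: "int ^ 'n \<Rightarrow> real"
    and \<Omega>0 \<Omega> :: "(int ^ 'n) set"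
    and u :: "nat \<Rightarrow> int ^ 'n \<Rightarrow> real"
  assumes n2: "CARD('n) \<ge> 2"
    and lam: "lam > 0"
    and M1: "M \<ge> 1"
    and p_dist: "inj_on p {..<M}"
    and m_pos: "\<forall>j<M. m j > 0"
    and g_def: "\<forall>x. g x = 4 * pi * (\<Sum>j<M. real (m j) * (if x = p j then 1 else 0))"
    and fin0: "finite \<Omega>0"
    and p_in: "\<forall>j<M. p j \<in> \<Omega>0"
    and fin: "finite \<Omega>"
    and conn: "lat_connected \<Omega>"
    and sub: "\<Omega>0 \<subseteq> \<Omega>"
    and K: "K > 2 * lam"
    and u0: "\<forall>x\<in>vclosure \<Omega>. u 0 x = 0"
    and u_eq: "\<forall>k\<ge>1. \<forall>x\<in>\<Omega>.
        lat_laplacian (u k) x - K * u k x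
          = lam * exp (u (k - 1) x) * (exp (u (k - 1) x) - 1) + g x - K * u (k - 1) x"
    and u_bd: "\<forall>k\<ge>1. \<forall>x\<in>vboundary \<Omega>. u k x = 0"
  shows "\<exists>v :: int ^ 'n \<Rightarrow> real.
           (\<forall>x\<in>vclosure \<Omega>. (\<lambda>k. u k x) \<longlonglongrightarrow> v x)
         \<and> (\<forall>x\<in>\<Omega>. lat_laplacian v x = lam * exp (v x) * (exp (v x) - 1) + g x)
         \<and> (\<forall>x\<in>vboundary \<Omega>. v x = 0)"
proof -
  interpret lat_monotone_iteration \<Omega> lam K g u
  proof
    show "0 \<le> lam" "lam \<le> K" "0 < K"
      using lam K by linarith+
    show "0 \<le> g x" for x
      using g_def by (simp add: sum_nonneg)
    show "lat_laplacian (u (Suc k)) x - K * u (Suc k) x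
        = lam * exp (u k x) * (exp (u k x) - 1) + g x - K * u k x" if "x \<in> \<Omega>" for k x
      using u_eq that by (metis diff_Suc_1 le_add1 plus_1_eq_Suc)
    show "u (Suc k) x = 0" if "x \<in> vboundary \<Omega>" for k x
      using u_bd that by simp
  qed (use fin u0 in auto)
  show ?thesis
    by (rule converges_to_solution)
qed

end
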